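(* Let $e\geqslant 1$ be an integer, $b\geqslant 2$ an even integer, and $a$ a positive integer. Assume there exist an $(e,b)$-happy number $l$ and a positive integer $h'$ with $h'\equiv a\pmod{b-1}$ such that $l\equiv T_{e,b}(h')\pmod{b-1}$. Then there exists an $(e,b)$-happy number $h$ with $h\equiv a\pmod{b-1}$.
   Context: For a positive integer $n=\sum_{j=0}^k a_j b^j$ with $0\leqslant a_j<b$, $T_{e,b}(n)=\sum_{j=0}^k a_j^e$; $T_{e,b}^r$ is the $r$-th iterate, $T_{e,b}^0(n)=n$. A positive integer $n$ is $(e,b)$-happy if $T_{e,b}^r(n)=1$ for some $r\geqslant 0$. *)

theory Defs
  imports Main "HOL-Number_Theory.Cong"
begin

fun T :: "nat \<Rightarrow> nat \<Rightarrow> nat \<Rightarrow> nat" where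
  "T e b n = (if n = 0 \<or> b < 2 then 0 else (n mod b) ^ e + T e b (n div b))"

declare T.simps [simp del]

definition happy :: "nat \<Rightarrow> nat \<Rightarrow> nat \<Rightarrow> bool" where
  "happy e b n \<longleftrightarrow> 0 < n \<and> (\<exists>r. (T e b ^^ r) n = 1)"

end

theory Submission
  imports Defs
begin

text \<open>Proof idea: multiplying a happy number \<open>l\<close> by a power of \<open>b\<close> only appends zero digits,
so \<open>L = l * b ^ T h'\<close> is happy, \<open>L \<ge> T h'\<close> and \<open>L \<equiv> l \<equiv> T h' (mod b - 1)\<close>. Appending
\<open>L - T h'\<close> digits \<open>1\<close> to \<open>h'\<close> gives a number \<open>h\<close> with \<open>T h = L\<close>, hence happy; since
\<open>b - 1\<close> divides the number of appended ones, \<open>h \<equiv> h' \<equiv> a (mod b - 1)\<close>.\<close>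

lemma T_zero [simp]: "T e b 0 = 0"
  by (simp add: T.simps)

lemma T_append_digit:
  assumes "b \<ge> 2" "d < b" "x * b + d > 0"
  shows "T e b (x * b + d) = d ^ e + T e b x"
proof -
  have "(x * b + d) mod b = d" "(x * b + d) div b = x"
    using assms by simp_all
  with assms show ?thesis
    by (subst T.simps) auto
qed

lemma T_one:
  assumes "b \<ge> 2"
  shows "T e b 1 = 1"
  using T_append_digit[OF assms, of 1 0 e] assms by simp

lemma T_mult_base_power:
  assumes "e \<ge> 1" "b \<ge> 2"
  shows "T e b (n * b ^ j) = T e b n"
proof (induction j)
  case (Suc j)
  show ?case
  proof (cases "n = 0")
    case False
    have "T e b (n * b ^ Suc j) = T e b (n * b ^ j * b + 0)"
      by (simp add: algebra_simps)
    also have "\<dots> = T e b (n * b ^ j)"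
      using assms False by (subst T_append_digit) auto
    finally show ?thesis using Suc.IH by simp
  qed simp
qed simp

lemma cong_base_power_nat:
  fixes b n j :: nat
  assumes "b \<ge> 2"
  shows "[n * b ^ j = n] (mod (b - 1))"
proof -
  have "[b = 1] (mod (b - 1))"
    using assms by (subst cong_altdef_nat) auto
  then have "[n * b ^ j = n * 1 ^ j] (mod (b - 1))"
    by (intro cong_mult cong_pow cong_refl)
  then show ?thesis by simp
qed

lemma happy_T_iff:
  assumes "b \<ge> 2" "n > 0"
  shows "happy e b (T e b n) \<longleftrightarrow> happy e b n"
proof
  assume "happy e b (T e b n)"
  then obtain r where "(T e b ^^ r) (T e b n) = 1"
    unfolding happy_def by blast
  then have "(T e b ^^ Suc r) n = 1"
    by (simp add: funpow_Suc_right del: funpow.simps)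
  with assms(2) show "happy e b n"
    unfolding happy_def by blast
next
  assume "happy e b n"
  then obtain r where r: "(T e b ^^ r) n = 1"
    unfolding happy_def by blast
  show "happy e b (T e b n)"
  proof (cases r)
    case 0
    with r have "T e b n = 1"
      using T_one[OF assms(1)] by simp
    then show ?thesis
      unfolding happy_def by (metis funpow_0 zero_less_one)
  next
    case (Suc r')
    with r have r': "(T e b ^^ r') (T e b n) = 1"
      by (simp add: funpow_Suc_right del: funpow.simps)
    have "(T e b ^^ r') 0 = 0"
      by (induction r') simp_all
    with r' have "T e b n > 0"
      by (metis gr0I zero_neq_one)
    with r' show ?thesis
      unfolding happy_def by blast
  qed
qed

lemma happy_mult_base_power:
  assumes "e \<ge> 1" "b \<ge> 2" "happy e b l"
  shows "happy e b (l * b ^ j)"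
proof -
  have "l > 0"
    using assms(3) by (simp add: happy_def)
  then have "l * b ^ j > 0"
    using assms(2) by simp
  with assms show ?thesis
    by (metis T_mult_base_power happy_T_iff \<open>l > 0\<close>)
qed

fun append_ones :: "nat \<Rightarrow> nat \<Rightarrow> nat \<Rightarrow> nat" where
  "append_ones b x 0 = x"
| "append_ones b x (Suc k) = append_ones b x k * b + 1"

lemma append_ones_pos: "x > 0 \<Longrightarrow> append_ones b x k > 0"
  by (induction k) auto

lemma T_append_ones:
  assumes "b \<ge> 2"
  shows "T e b (append_ones b x k) = T e b x + k"
proof (induction k)
  case (Suc k)
  have "T e b (append_ones b x k * b + 1) = 1 ^ e + T e b (append_ones b x k)"
    using assms by (intro T_append_digit) auto
  with Suc.IH show ?case by simp
qed simp

lemma append_ones_cong: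
  assumes "b \<ge> 2"
  shows "[append_ones b x k = x + k] (mod (b - 1))"
proof (induction k)
  case (Suc k)
  have "[append_ones b x k * b = (x + k) * 1] (mod (b - 1))"
    using Suc.IH cong_base_power_nat[OF assms, of "append_ones b x k" 1]
    by (simp add: cong_trans)
  then have "[append_ones b x k * b + 1 = (x + k) * 1 + 1] (mod (b - 1))"
    by (intro cong_add cong_refl)
  then show ?case by simp
qed simp

lemma happy_append_ones:
  assumes "b \<ge> 2" "x > 0" "happy e b (T e b x + k)"
  shows "happy e b (append_ones b x k)"
  using assms append_ones_pos[OF assms(2)]
  by (metis T_append_ones happy_T_iff)

theorem lemma2p5:
  fixes e b a :: nat
  assumes "e \<ge> 1" and "b \<ge> 2" and "even b" and "a > 0"
    and "\<exists>l h'. happy e b l \<and> h' > 0 \<and> [h' = a] (mod (b - 1))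
               \<and> [l = T e b h'] (mod (b - 1))"
  shows "\<exists>h. happy e b h \<and> [h = a] (mod (b - 1))"
proof -
  obtain l h' where l: "happy e b l" and "h' > 0" and h': "[h' = a] (mod (b - 1))"
    and l_cong: "[l = T e b h'] (mod (b - 1))"
    using assms(5) by blast
  define L where "L = l * b ^ T e b h'"
  have "happy e b L"
    unfolding L_def using assms(1,2) l by (rule happy_mult_base_power)
  have "T e b h' < 2 ^ T e b h'"
    by (rule less_exp)
  also have "\<dots> \<le> b ^ T e b h'"
    using assms(2) by (simp add: power_mono)
  also have "\<dots> \<le> L"
    using l by (simp add: L_def happy_def)
  finally have T_le: "T e b h' \<le> L" by simp
  have "[L = T e b h'] (mod (b - 1))"
    unfolding L_def using cong_base_power_nat[OF assms(2)] l_cong by (rule cong_trans)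
  then have k_cong: "[L - T e b h' = 0] (mod (b - 1))"
    using T_le by (simp add: cong_altdef_nat cong_0_iff)
  define h where "h = append_ones b h' (L - T e b h')"
  have "happy e b h"
    unfolding h_def using assms(2) \<open>h' > 0\<close> \<open>happy e b L\<close> T_le
    by (intro happy_append_ones) simp_all
  moreover have "[h = a] (mod (b - 1))"
    using append_ones_cong[OF assms(2)] cong_add[OF h' k_cong]
    unfolding h_def by (metis add_0_right cong_trans)
  ultimately show ?thesis by blast
qed

end
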